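(* Let $P$ and $Q$ be ultra-parallel planes in $\mathbb{H}^4$. Then $H_PH_Q$ is a hyperbolic isometry.
   Context: A plane is a $2$-dimensional totally geodesic subspace of $\mathbb{H}^4$. Two planes are ultra-parallel if their closures in $\mathbb{H}^4\cup\partial\mathbb{H}^4$ are disjoint. For a plane $P$, the half-turn $H_P$ is the composition of reflections in two orthogonal hyperplanes intersecting in $P$; it is the orientation preserving involution with fixed set $P$. *)

theory Defs
  imports "HOL-Analysis.Analysis"
begin

text \<open>Hyperboloid model of H^4 in Minkowski space R^{1,4}, represented as
  real \<times> real^4 (time coordinate, spatial part).\<close>

type_synonym mink = "real \<times> (real^4)"

definition mink_form :: "mink \<Rightarrow> mink \<Rightarrow> real" where
  "mink_form x y = - fst x * fst y + snd x \<bullet> snd y"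

definition H4 :: "mink set" where
  "H4 = {x. mink_form x x = -1 \<and> fst x > 0}"

text \<open>A plane (2-dim totally geodesic subspace) is a nonempty intersection of H4
  with a 3-dimensional linear subspace of R^{1,4}.\<close>
definition is_plane :: "mink set \<Rightarrow> bool" where
  "is_plane P \<longleftrightarrow> (\<exists>V. subspace V \<and> dim V = 3 \<and> P = H4 \<inter> V \<and> P \<noteq> {})"

text \<open>Reflection in the hyperplane H4 \<inter> n^perp, n a unit spacelike vector.\<close>
definition mink_refl :: "mink \<Rightarrow> mink \<Rightarrow> mink" where
  "mink_refl n x = x - (2 * mink_form x n) *\<^sub>R n"

definition is_half_turn :: "mink set \<Rightarrow> (mink \<Rightarrow> mink) \<Rightarrow> bool" where
  "is_half_turn P h \<longleftrightarrow> (\<exists>n1 n2. mink_form n1 n1 = 1 \<and> mink_form n2 n2 = 1 \<and>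
      mink_form n1 n2 = 0 \<and>
      P = {x \<in> H4. mink_form x n1 = 0 \<and> mink_form x n2 = 0} \<and>
      h = mink_refl n1 \<circ> mink_refl n2)"

text \<open>Map to the Poincare ball model (open unit ball of R^4); the closure of a set in
  H4 \<union> \<partial>H4 is its closure in the closed unit ball.\<close>
definition to_ball :: "mink \<Rightarrow> real^4" where
  "to_ball x = (1 / (1 + fst x)) *\<^sub>R snd x"

definition ultra_parallel :: "mink set \<Rightarrow> mink set \<Rightarrow> bool" where
  "ultra_parallel P Q \<longleftrightarrow> closure (to_ball ` P) \<inter> closure (to_ball ` Q) = {}"

definition is_H4_isometry :: "(mink \<Rightarrow> mink) \<Rightarrow> bool" where
  "is_H4_isometry g \<longleftrightarrow> linear g \<and> (\<forall>x y. mink_form (g x) (g y) = mink_form x y) \<and> g ` H4 = H4"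

text \<open>Boundary point \<xi> (unit vector in R^4, i.e. the null ray through (1,\<xi>)) fixed by g.\<close>
definition fixes_boundary_point :: "(mink \<Rightarrow> mink) \<Rightarrow> real^4 \<Rightarrow> bool" where
  "fixes_boundary_point g \<xi> \<longleftrightarrow> norm \<xi> = 1 \<and> (\<exists>c>0. g (1, \<xi>) = c *\<^sub>R (1, \<xi>))"

definition hyperbolic_isometry :: "(mink \<Rightarrow> mink) \<Rightarrow> bool" where
  "hyperbolic_isometry g \<longleftrightarrow> is_H4_isometry g \<and> (\<forall>x\<in>H4. g x \<noteq> x) \<and>
     card {\<xi>. fixes_boundary_point g \<xi>} = 2"

end

theory Submission
  imports Defs "HOL-Real_Asymp.Real_Asymp"
begin

(*
  Write P = H4 \<inter> {n1, n2}^\<perp> and Q = H4 \<inter> {m1, m2}^\<perp>, so that hP = id - 2 \<pi>_N and hQ = id - 2 \<pi>_M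
  with \<pi>_N, \<pi>_M the orthogonal projections onto N = span {n1, n2} and M = span {m1, m2}.
  Ultra-parallelism says that no nonzero causal vector is orthogonal to all four normals: a timelike
  one would give a common point of P and Q, a null one a common boundary point.
  A fixed point x of g = hP hQ in H4 satisfies \<pi>_N x = \<pi>_M x, so x - \<pi>_N x is such a timelike vector.
  The operator \<pi>_N \<pi>_M on N has an eigenvalue \<mu> > 1: otherwise the form would be positive semidefinite
  on span {n1, n2, m1, m2}, whose orthogonal complement would then contain a causal vector.
  For an eigenvector a and b = \<pi>_M a, g preserves span {a, b} with trace 4\<mu> - 2 and determinant 1,
  hence has two null eigenvectors with distinct positive eigenvalues l and 1/l: two fixed boundary
  points. A third one, with eigenvalue c, would force c l = 1 = c / l.
*)

section \<open>The Minkowski form and the hyperboloid\<close>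

lemma mink_form_commute: "mink_form x y = mink_form y x"
  by (simp add: mink_form_def inner_commute mult.commute)

lemma mink_form_add_left [simp]: "mink_form (x + y) z = mink_form x z + mink_form y z"
  and mink_form_add_right [simp]: "mink_form z (x + y) = mink_form z x + mink_form z y"
  and mink_form_diff_left [simp]: "mink_form (x - y) z = mink_form x z - mink_form y z"
  and mink_form_diff_right [simp]: "mink_form z (x - y) = mink_form z x - mink_form z y"
  and mink_form_scaleR_left [simp]: "mink_form (c *\<^sub>R x) z = c * mink_form x z"
  and mink_form_scaleR_right [simp]: "mink_form z (c *\<^sub>R x) = c * mink_form z x"
  and mink_form_minus_left [simp]: "mink_form (- x) z = - mink_form x z"
  and mink_form_minus_right [simp]: "mink_form z (- x) = - mink_form z x"
  and mink_form_zero_left [simp]: "mink_form 0 z = 0"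
  and mink_form_zero_right [simp]: "mink_form z 0 = 0"
  by (simp_all add: mink_form_def inner_add_left inner_add_right inner_diff_left
      inner_diff_right algebra_simps)

lemma mink_form_eq_inner: "mink_form x y = (- fst x, snd x) \<bullet> y"
  by (simp add: mink_form_def inner_prod_def)

lemma norm_snd_less_abs_fst:
  assumes "mink_form x x < 0"
  shows "norm (snd x) < \<bar>fst x\<bar>"
proof -
  have "norm (snd x) ^ 2 < \<bar>fst x\<bar> ^ 2"
    using assms unfolding power2_norm_eq_inner by (simp add: mink_form_def power2_eq_square)
  thus ?thesis by (rule power_less_imp_less_base) simp
qed

lemma norm_snd_eq_abs_fst:
  assumes "mink_form x x = 0"
  shows "norm (snd x) = \<bar>fst x\<bar>"
proof -
  have "norm (snd x) ^ 2 = \<bar>fst x\<bar> ^ 2"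
    using assms unfolding power2_norm_eq_inner by (simp add: mink_form_def power2_eq_square)
  thus ?thesis by (metis power2_eq_iff_nonneg norm_ge_zero abs_ge_zero)
qed

lemma H4_norm_snd_less: "x \<in> H4 \<Longrightarrow> norm (snd x) < fst x"
  using norm_snd_less_abs_fst[of x] by (simp add: H4_def)

lemma H4_same_sheet:
  assumes x: "x \<in> H4" and y: "mink_form y y = -1" and xy: "mink_form x y < 0"
  shows "y \<in> H4"
proof (rule ccontr)
  assume "y \<notin> H4"
  hence "norm (snd y) < - fst y" using y norm_snd_less_abs_fst[of y] by (simp add: H4_def)
  hence "norm (snd x) * norm (snd y) < fst x * - fst y"
    using H4_norm_snd_less[OF x] x by (intro mult_strict_mono) (simp_all add: H4_def)
  moreover have "- (snd x \<bullet> snd y) \<le> norm (snd x) * norm (snd y)"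
    using norm_cauchy_schwarz[of "- snd x" "snd y"] by simp
  ultimately show False using xy by (simp add: mink_form_def)
qed

lemma linear_mink_refl: "linear (mink_refl n)"
  unfolding mink_refl_def by (rule linearI) (simp_all add: algebra_simps scaleR_add_left)

lemma mink_form_mink_refl:
  "mink_form n n = 1 \<Longrightarrow> mink_form (mink_refl n x) (mink_refl n y) = mink_form x y"
  unfolding mink_refl_def by (simp add: mink_form_commute[of n x] mink_form_commute[of n y] algebra_simps)

lemma mink_refl_mink_refl: "mink_form n n = 1 \<Longrightarrow> mink_refl n (mink_refl n x) = x"
  unfolding mink_refl_def by (simp add: algebra_simps)

lemma mink_refl_H4:
  assumes n: "mink_form n n = 1" and x: "x \<in> H4"
  shows "mink_refl n x \<in> H4"
proof (rule H4_same_sheet[OF x])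
  have xx: "mink_form x x = -1" using x by (simp add: H4_def)
  thus "mink_form (mink_refl n x) (mink_refl n x) = -1" using mink_form_mink_refl[OF n] by simp
  have "mink_form x (mink_refl n x) = -1 - 2 * (mink_form x n)\<^sup>2"
    using xx by (simp add: mink_refl_def power2_eq_square)
  thus "mink_form x (mink_refl n x) < 0" by (smt (verit) zero_le_power2)
qed

lemma is_H4_isometry_mink_refl:
  assumes n: "mink_form n n = 1"
  shows "is_H4_isometry (mink_refl n)"
proof -
  have "mink_refl n ` H4 = H4"
  proof (intro subset_antisym subsetI)
    fix x assume "x \<in> H4"
    thus "x \<in> mink_refl n ` H4"
      by (intro image_eqI[of _ _ "mink_refl n x"]) (simp_all add: mink_refl_mink_refl[OF n] mink_refl_H4[OF n])
  qed (use mink_refl_H4[OF n] in blast)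
  thus ?thesis
    using linear_mink_refl mink_form_mink_refl[OF n] by (simp add: is_H4_isometry_def)
qed

lemma is_H4_isometry_comp:
  assumes "is_H4_isometry f" "is_H4_isometry g"
  shows "is_H4_isometry (f \<circ> g)"
proof -
  have lin: "linear f" "linear g" and img: "f ` H4 = H4" "g ` H4 = H4"
    and f: "\<forall>x y. mink_form (f x) (f y) = mink_form x y"
    and g: "\<forall>x y. mink_form (g x) (g y) = mink_form x y"
    using assms by (simp_all add: is_H4_isometry_def)
  have "mink_form (f (g x)) (f (g y)) = mink_form x y" for x y
    using f[rule_format, of "g x" "g y"] g[rule_format, of x y] by simp
  moreover have "(\<lambda>x. f (g x)) ` H4 = H4" using img by (metis image_image)
  ultimately show ?thesis using lin by (simp add: is_H4_isometry_def linear_compose)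
qed

section \<open>Half-turns as projections\<close>

definition mink_orthonormal :: "mink \<Rightarrow> mink \<Rightarrow> bool" where
  "mink_orthonormal n1 n2 \<longleftrightarrow> mink_form n1 n1 = 1 \<and> mink_form n2 n2 = 1 \<and> mink_form n1 n2 = 0"

definition mink_proj :: "mink \<Rightarrow> mink \<Rightarrow> mink \<Rightarrow> mink" where
  "mink_proj n1 n2 x = mink_form x n1 *\<^sub>R n1 + mink_form x n2 *\<^sub>R n2"

definition half_turn :: "mink \<Rightarrow> mink \<Rightarrow> mink \<Rightarrow> mink" where
  "half_turn n1 n2 x = x - 2 *\<^sub>R mink_proj n1 n2 x"

definition mink_orth :: "mink set \<Rightarrow> mink set" where
  "mink_orth S = {x. \<forall>n\<in>S. mink_form x n = 0}"

lemma linear_mink_proj: "linear (mink_proj n1 n2)"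
  unfolding mink_proj_def by (rule linearI) (simp_all add: algebra_simps)

lemma mink_form_mink_proj_commute:
  "mink_form (mink_proj n1 n2 x) y = mink_form x (mink_proj n1 n2 y)"
  by (simp add: mink_proj_def mink_form_commute[of n1 y] mink_form_commute[of n2 y] algebra_simps)

context
  fixes n1 n2 :: mink
  assumes orthonormal: "mink_orthonormal n1 n2"
begin

lemma mink_form_mink_proj_normal [simp]:
  "mink_form (mink_proj n1 n2 x) n1 = mink_form x n1"
  "mink_form (mink_proj n1 n2 x) n2 = mink_form x n2"
  using orthonormal
  by (simp_all add: mink_orthonormal_def mink_proj_def mink_form_commute[of n2 n1])

lemma mink_proj_idem [simp]: "mink_proj n1 n2 (mink_proj n1 n2 x) = mink_proj n1 n2 x"
  unfolding mink_proj_def[of n1 n2 "mink_proj n1 n2 x"] mink_form_mink_proj_normal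
  by (simp add: mink_proj_def)

lemma mink_form_mink_proj_self:
  "mink_form (mink_proj n1 n2 x) (mink_proj n1 n2 x) = (mink_form x n1)\<^sup>2 + (mink_form x n2)\<^sup>2"
  using orthonormal by (simp add: mink_orthonormal_def mink_proj_def[of n1 n2 x]
      mink_form_commute[of n2 n1] power2_eq_square)

lemma mink_form_mink_proj_right:
  "mink_form x (mink_proj n1 n2 y) = mink_form (mink_proj n1 n2 x) (mink_proj n1 n2 y)"
  by (metis mink_form_mink_proj_commute mink_proj_idem)

lemma mink_proj_span:
  assumes "a \<in> span {n1, n2}"
  shows "mink_proj n1 n2 a = a"
proof -
  have "subspace {a. mink_proj n1 n2 a = a}"
    using linear_mink_proj[of n1 n2] by (auto simp: subspace_def linear_0 linear_add linear_cmul)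
  moreover have "{n1, n2} \<subseteq> {a. mink_proj n1 n2 a = a}"
    using orthonormal by (simp add: mink_orthonormal_def mink_proj_def mink_form_commute[of n2 n1])
  ultimately show ?thesis using assms span_minimal by blast
qed

lemma half_turn_half_turn: "half_turn n1 n2 (half_turn n1 n2 x) = x"
  using linear_mink_proj[of n1 n2]
  by (simp add: half_turn_def linear_diff linear_cmul algebra_simps flip: scaleR_add_left)

lemma mink_refl_comp_eq_half_turn: "mink_refl n1 \<circ> mink_refl n2 = half_turn n1 n2"
  using orthonormal
  by (auto simp: mink_orthonormal_def mink_refl_def half_turn_def mink_proj_def
      mink_form_commute[of n2 n1] algebra_simps)

lemma is_H4_isometry_half_turn: "is_H4_isometry (half_turn n1 n2)"
  using orthonormal is_H4_isometry_comp is_H4_isometry_mink_refl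
  by (metis mink_orthonormal_def mink_refl_comp_eq_half_turn)

end

lemma is_half_turnE:
  assumes "is_half_turn P h"
  obtains n1 n2 where "mink_orthonormal n1 n2" "P = H4 \<inter> mink_orth {n1, n2}"
    "h = half_turn n1 n2"
proof -
  from assms obtain n1 n2 where n: "mink_orthonormal n1 n2"
    and P: "P = {x \<in> H4. mink_form x n1 = 0 \<and> mink_form x n2 = 0}"
    and h: "h = mink_refl n1 \<circ> mink_refl n2"
    unfolding is_half_turn_def mink_orthonormal_def by blast
  have "P = H4 \<inter> mink_orth {n1, n2}" by (auto simp: P mink_orth_def)
  with n h mink_refl_comp_eq_half_turn[OF n] show thesis by (metis that)
qed

lemma subspace_mink_orth: "subspace (mink_orth S)"
  by (auto simp: subspace_def mink_orth_def)

lemma mink_orth_span: "mink_orth (span S) = mink_orth S"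
proof
  show "mink_orth (span S) \<subseteq> mink_orth S"
    using span_superset by (auto simp: mink_orth_def)
  show "mink_orth S \<subseteq> mink_orth (span S)"
  proof (clarsimp simp: mink_orth_def)
    fix x y assume x: "\<forall>n\<in>S. mink_form x n = 0" and y: "y \<in> span S"
    have "span S \<subseteq> {y. mink_form x y = 0}"
      using x by (intro span_minimal) (auto simp: subspace_def)
    with y show "mink_form x y = 0" by blast
  qed
qed

section \<open>Ultra-parallel planes and causal vectors\<close>

lemma null_vectorE:
  assumes "mink_form v v = 0" "v \<noteq> 0"
  obtains \<xi> where "norm \<xi> = 1" "fst v \<noteq> 0" "v = fst v *\<^sub>R (1, \<xi>)"
proof
  have "norm (snd v) = \<bar>fst v\<bar>" using norm_snd_eq_abs_fst[OF assms(1)] .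
  thus fst: "fst v \<noteq> 0" using assms(2) by (cases v) (auto simp: zero_prod_def)
  show "norm ((1 / fst v) *\<^sub>R snd v) = 1" using fst \<open>norm (snd v) = \<bar>fst v\<bar>\<close> by simp
  show "v = fst v *\<^sub>R (1, (1 / fst v) *\<^sub>R snd v)" using fst by (simp add: prod_eq_iff)
qed

lemma tendsto_boundary_approach_ratio:
  fixes c p0 M :: real
  assumes "c > 0" "p0 > 0"
  shows "(\<lambda>k::nat. (M + sqrt (1 + 2 * c * real k) + p0) / (sqrt (1 + 2 * c * real k) + p0 + real k))
    \<longlonglongrightarrow> 0"
  using assms by real_asymp

text \<open>The points of H4 \<inter> V on the rays through p + k (1, \<xi>), k \<in> \<nat>, converge to \<xi> in the
  ball model.\<close>
lemma boundary_point_in_closure: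
  assumes V: "subspace V" and p: "p \<in> H4 \<inter> V"
    and \<xi>: "norm \<xi> = 1" "(1, \<xi>) \<in> V"
  shows "\<xi> \<in> closure (to_ball ` (H4 \<inter> V))"
proof -
  define u :: mink where "u = (1, \<xi>)"
  define c where "c = - mink_form p u"
  have pp: "mink_form p p = -1" and p0: "fst p > 0" using p by (simp_all add: H4_def)
  have uu: "mink_form u u = 0" using \<xi> by (simp add: u_def mink_form_def dot_square_norm)
  have "snd p \<bullet> \<xi> \<le> norm (snd p)" using norm_cauchy_schwarz[of "snd p" \<xi>] \<xi> by simp
  hence c0: "c > 0" using H4_norm_snd_less[of p] p by (simp add: c_def u_def mink_form_def)
  define s where "s = (\<lambda>k::nat. sqrt (1 + 2 * c * real k))"
  have ck: "0 < 1 + 2 * c * real k" for k using c0 by (simp add: add_pos_nonneg)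
  have s0: "s k > 0" and ss: "s k * s k = 1 + 2 * c * real k" for k
    using ck[of k] by (simp_all add: s_def)
  define f where "f = (\<lambda>k::nat. (1 / s k) *\<^sub>R (p + real k *\<^sub>R u))"
  have f_in: "f k \<in> H4 \<inter> V" for k
  proof -
    have "mink_form (f k) (f k) = (mink_form p p + 2 * real k * mink_form p u) / (s k * s k)"
      using uu by (simp add: f_def mink_form_commute[of u p] algebra_simps add_divide_distrib)
    also have "\<dots> = -1" using pp ss[of k] s0[of k] by (simp add: c_def field_simps)
    finally have "mink_form (f k) (f k) = -1" .
    moreover have "fst (f k) > 0" using p0 s0[of k] by (simp add: f_def u_def)
    moreover have "f k \<in> V"
      using V p \<xi>(2) by (simp add: f_def flip: u_def add: subspace_add subspace_scale)
    ultimately show ?thesis by (simp add: H4_def)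
  qed
  define D where "D = (\<lambda>k. s k + fst p + real k)"
  have D0: "D k > 0" for k using s0[of k] p0 by (simp add: D_def)
  have "to_ball (f k) - \<xi> = (1 / D k) *\<^sub>R (snd p - (s k + fst p) *\<^sub>R \<xi>)" for k
  proof -
    have "to_ball (f k) = (1 / D k) *\<^sub>R (snd p + real k *\<^sub>R \<xi>)"
      using s0[of k] D0[of k] by (simp add: to_ball_def f_def u_def D_def field_simps)
    hence "to_ball (f k) - \<xi> = (1 / D k) *\<^sub>R (snd p + real k *\<^sub>R \<xi> - D k *\<^sub>R \<xi>)"
      using D0[of k] by (simp add: scaleR_diff_right)
    thus ?thesis by (simp add: D_def algebra_simps)
  qed
  hence bound: "norm (to_ball (f k) - \<xi>) \<le> (norm (snd p) + s k + fst p) / D k" for k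
    using norm_triangle_ineq4[of "snd p" "(s k + fst p) *\<^sub>R \<xi>"] \<xi> s0[of k] p0 D0[of k]
    by (simp add: divide_right_mono)
  have "(\<lambda>k. (norm (snd p) + s k + fst p) / D k) \<longlonglongrightarrow> 0"
    using tendsto_boundary_approach_ratio[OF c0 p0] by (simp add: s_def D_def add.assoc)
  hence "(\<lambda>k. to_ball (f k) - \<xi>) \<longlonglongrightarrow> 0"
    by (rule Lim_null_comparison[rotated]) (simp add: bound)
  hence "(\<lambda>k. to_ball (f k)) \<longlonglongrightarrow> \<xi>" by (simp add: LIM_zero_iff)
  thus ?thesis unfolding closure_sequential using f_in
    by (intro exI[of _ "\<lambda>k. to_ball (f k)"]) blast
qed

lemma ultra_parallel_causal_common_vector_eq_0:
  assumes V: "subspace V" "H4 \<inter> V \<noteq> {}" and W: "subspace W" "H4 \<inter> W \<noteq> {}"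
    and up: "ultra_parallel (H4 \<inter> V) (H4 \<inter> W)"
    and s: "s \<in> V \<inter> W" "mink_form s s \<le> 0"
  shows "s = 0"
proof (rule ccontr)
  assume "s \<noteq> 0"
  have disj: "closure (to_ball ` (H4 \<inter> V)) \<inter> closure (to_ball ` (H4 \<inter> W)) = {}"
    using up by (simp add: ultra_parallel_def)
  show False
  proof (cases "mink_form s s < 0")
    case True
    have "norm (snd s) < \<bar>fst s\<bar>" using norm_snd_less_abs_fst[OF True] .
    hence "fst s \<noteq> 0" by auto
    define x where "x = (sgn (fst s) / sqrt (- mink_form s s)) *\<^sub>R s"
    have "mink_form x x = -1" using True \<open>fst s \<noteq> 0\<close> by (simp add: x_def sgn_if)
    moreover have "fst x > 0" using True \<open>fst s \<noteq> 0\<close> by (simp add: x_def sgn_if)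
    moreover have "x \<in> V \<inter> W" using s V W by (simp add: x_def subspace_scale)
    ultimately have "to_ball x \<in> to_ball ` (H4 \<inter> V) \<inter> to_ball ` (H4 \<inter> W)"
      by (simp add: H4_def)
    thus False using disj closure_subset[of "to_ball ` (H4 \<inter> V)"]
        closure_subset[of "to_ball ` (H4 \<inter> W)"] by blast
  next
    case False
    then obtain \<xi> where \<xi>: "norm \<xi> = 1" "fst s \<noteq> 0" "s = fst s *\<^sub>R (1, \<xi>)"
      using s(2) \<open>s \<noteq> 0\<close> null_vectorE[of s] by force
    have "(1, \<xi>) = (1 / fst s) *\<^sub>R s" using \<xi>(2) by (subst \<xi>(3)) simp
    hence "(1, \<xi>) \<in> V \<inter> W" using s V W by (simp add: subspace_scale)
    hence "\<xi> \<in> closure (to_ball ` (H4 \<inter> V)) \<inter> closure (to_ball ` (H4 \<inter> W))"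
      using V W \<xi>(1) by (blast intro: boundary_point_in_closure)
    thus False using disj by blast
  qed
qed

lemma dim_mink_orth:
  assumes C: "subspace C"
  shows "dim (mink_orth C) + dim C = DIM(mink)"
proof -
  define J :: "mink \<Rightarrow> mink" where "J x = (- fst x, snd x)" for x
  have J: "linear J" "inj J"
    by (auto intro!: linearI injI simp: J_def prod_eq_iff)
  have "orthogonal (J x) y \<longleftrightarrow> mink_form y x = 0" for x y
    unfolding orthogonal_def J_def mink_form_eq_inner[symmetric] by (simp add: mink_form_commute)
  hence "mink_orth C = {y \<in> UNIV. \<forall>x\<in>J ` C. orthogonal x y}"
    by (auto simp: mink_orth_def)
  moreover have "dim (J ` C) = dim C"
    using J by (intro dim_image_eq) (auto intro: inj_on_subset)
  moreover have "subspace (J ` C)" using J(1) C by (rule linear_subspace_image)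
  ultimately show ?thesis
    using dim_subspace_orthogonal_to_vectors[of "J ` C" UNIV] by (simp add: dim_UNIV)
qed

text \<open>Otherwise C and its complement would be transversal of complementary dimensions, making
  the form positive semidefinite on all of R^{1,4}.\<close>
lemma causal_vector_in_mink_orth:
  assumes C: "subspace C" and psd: "\<forall>x\<in>C. 0 \<le> mink_form x x"
  shows "\<exists>s\<in>mink_orth C. s \<noteq> 0 \<and> mink_form s s \<le> 0"
proof (rule ccontr)
  assume no_causal: "\<not> ?thesis"
  hence pos: "0 \<le> mink_form s s" if "s \<in> mink_orth C" for s
    using that by force
  let ?N = "mink_orth C"
  let ?S = "{x + y |x y. x \<in> ?N \<and> y \<in> C}"
  have "?N \<inter> C = {0}"
  proof (intro subset_antisym subsetI)
    fix s assume s: "s \<in> ?N \<inter> C"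
    hence "mink_form s s = 0" by (simp add: mink_orth_def)
    thus "s \<in> {0}" using s no_causal by force
  qed (use C subspace_mink_orth in \<open>simp add: subspace_0\<close>)
  moreover have "dim ?S + dim (?N \<inter> C) = dim ?N + dim C"
    using dim_sums_Int[OF subspace_mink_orth[of C] C] .
  ultimately have "dim ?S = DIM(mink)" using dim_mink_orth[OF C] by simp
  hence "span ?S = UNIV" by (simp only: dim_eq_full)
  moreover have "span ?S = ?S" using subspace_sums[OF subspace_mink_orth[of C] C] by (simp only: span_eq_iff)
  ultimately obtain s c where sc: "(1, 0) = s + c" "s \<in> ?N" "c \<in> C" by blast
  have "-1 = mink_form (s + c) (s + c)" unfolding sc(1)[symmetric] by (simp add: mink_form_def)
  also have "\<dots> = mink_form s s + mink_form c c"
    using sc(2,3) by (simp add: mink_orth_def mink_form_commute[of c s])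
  finally show False using pos[OF sc(2)] psd sc(3) by force
qed

section \<open>Hyperbolic isometries from null eigenvectors\<close>

lemma boundary_fixed_points_scale_product:
  assumes g: "\<forall>x y. mink_form (g x) (g y) = mink_form x y"
    and \<xi>: "norm \<xi> = 1" "g (1, \<xi>) = c *\<^sub>R (1, \<xi>)"
    and \<eta>: "norm \<eta> = 1" "g (1, \<eta>) = d *\<^sub>R (1, \<eta>)"
    and "\<xi> \<noteq> \<eta>"
  shows "c * d = 1"
proof -
  have "0 < (norm (\<xi> - \<eta>))\<^sup>2" using \<open>\<xi> \<noteq> \<eta>\<close> by simp
  also have "(norm (\<xi> - \<eta>))\<^sup>2 = \<xi> \<bullet> \<xi> - 2 * (\<xi> \<bullet> \<eta>) + \<eta> \<bullet> \<eta>"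
    by (simp add: power2_norm_eq_inner inner_diff_left inner_diff_right inner_commute)
  finally have "\<xi> \<bullet> \<eta> < 1" using \<xi>(1) \<eta>(1) by (simp add: dot_square_norm)
  hence "mink_form (1, \<xi>) (1, \<eta>) \<noteq> 0" by (simp add: mink_form_def)
  moreover have "c * d * mink_form (1, \<xi>) (1, \<eta>) = mink_form (1, \<xi>) (1, \<eta>)"
    using g \<xi>(2) \<eta>(2) by (metis mink_form_scaleR_left mink_form_scaleR_right mult.assoc)
  ultimately show ?thesis by simp
qed

lemma hyperbolic_isometryI:
  assumes iso: "is_H4_isometry g" and no_fixed_point: "\<forall>x\<in>H4. g x \<noteq> x"
    and v1: "v1 \<noteq> 0" "mink_form v1 v1 = 0" "g v1 = l1 *\<^sub>R v1"
    and v2: "v2 \<noteq> 0" "mink_form v2 v2 = 0" "g v2 = l2 *\<^sub>R v2"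
    and l: "0 < l1" "0 < l2" "l1 \<noteq> l2"
  shows "hyperbolic_isometry g"
proof -
  have lin: "linear g" and g: "\<forall>x y. mink_form (g x) (g y) = mink_form x y"
    using iso by (simp_all add: is_H4_isometry_def)
  have eigen_boundary: "\<exists>\<xi>. norm \<xi> = 1 \<and> g (1, \<xi>) = l *\<^sub>R (1, \<xi>)"
    if v: "v \<noteq> 0" "mink_form v v = 0" "g v = l *\<^sub>R v" for v l
  proof -
    obtain \<xi> where \<xi>: "norm \<xi> = 1" "fst v \<noteq> 0" "v = fst v *\<^sub>R (1, \<xi>)"
      using null_vectorE v(1,2) by blast
    have "fst v *\<^sub>R g (1, \<xi>) = fst v *\<^sub>R (l *\<^sub>R (1, \<xi>))"
      using v(3) \<xi>(3) linear_cmul[OF lin] by (metis scaleR_left_commute)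
    hence "g (1, \<xi>) = l *\<^sub>R (1, \<xi>)" using \<xi>(2) by (metis scaleR_cancel_left)
    with \<xi>(1) show ?thesis by blast
  qed
  obtain \<xi>1 where \<xi>1: "norm \<xi>1 = 1" "g (1, \<xi>1) = l1 *\<^sub>R (1, \<xi>1)"
    using eigen_boundary[OF v1] by blast
  obtain \<xi>2 where \<xi>2: "norm \<xi>2 = 1" "g (1, \<xi>2) = l2 *\<^sub>R (1, \<xi>2)"
    using eigen_boundary[OF v2] by blast
  have "\<xi>1 \<noteq> \<xi>2"
  proof
    assume "\<xi>1 = \<xi>2"
    hence "fst (l1 *\<^sub>R (1::real, \<xi>1)) = fst (l2 *\<^sub>R (1::real, \<xi>1))" using \<xi>1 \<xi>2 by metis
    thus False using l(3) by simp
  qed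
  have "{\<xi>. fixes_boundary_point g \<xi>} = {\<xi>1, \<xi>2}"
  proof (intro subset_antisym subsetI)
    fix \<eta> assume "\<eta> \<in> {\<xi>. fixes_boundary_point g \<xi>}"
    then obtain c where \<eta>: "norm \<eta> = 1" "g (1, \<eta>) = c *\<^sub>R (1, \<eta>)"
      by (auto simp: fixes_boundary_point_def)
    show "\<eta> \<in> {\<xi>1, \<xi>2}"
    proof (rule ccontr)
      assume "\<eta> \<notin> {\<xi>1, \<xi>2}"
      hence "c * l1 = 1" "c * l2 = 1"
        using boundary_fixed_points_scale_product[OF g \<eta>] \<xi>1 \<xi>2 by auto
      thus False using l(3) by (metis mult_cancel_left mult_zero_left zero_neq_one)
    qed
  qed (use \<xi>1 \<xi>2 l in \<open>auto simp: fixes_boundary_point_def\<close>)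
  thus ?thesis
    using iso no_fixed_point \<open>\<xi>1 \<noteq> \<xi>2\<close> by (simp add: hyperbolic_isometry_def)
qed

section \<open>Two-dimensional eigenvalue problems\<close>

lemma quadratic_form_nonneg_if_singular:
  fixes A B C x y :: real
  assumes "A \<ge> 0" "C \<ge> 0" "A * C = B * B"
  shows "A * x * x - 2 * B * x * y + C * y * y \<ge> 0"
proof (cases "A = 0")
  case True
  thus ?thesis using assms by (simp add: mult.assoc)
next
  case False
  have "A * (A * x * x - 2 * B * x * y + C * y * y) = (A * x - B * y)\<^sup>2"
    using assms(3) by (simp add: power2_eq_square algebra_simps)
  hence "A * (A * x * x - 2 * B * x * y + C * y * y) \<ge> 0" by simp
  thus ?thesis using False assms(1) by (simp add: zero_le_mult_iff)
qed

text \<open>The top eigenvalue of a symmetric 2 \<times> 2 matrix dominates its Rayleigh quotient.\<close>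
lemma symmetric_2x2_eigenvector_gt_1:
  fixes k11 k12 k22 x1 x2 :: real
  assumes exceeds: "k11 * x1 * x1 + 2 * k12 * x1 * x2 + k22 * x2 * x2 > x1 * x1 + x2 * x2"
  obtains \<mu> z1 z2 where "\<mu> > 1" "k11 * z1 + k12 * z2 = \<mu> * z1" "k12 * z1 + k22 * z2 = \<mu> * z2"
    "z1 * z1 + z2 * z2 > 0"
proof -
  define d where "d = sqrt (((k11 - k22) / 2)\<^sup>2 + k12\<^sup>2)"
  define \<mu> where "\<mu> = (k11 + k22) / 2 + d"
  have "d \<ge> \<bar>(k11 - k22) / 2\<bar>"
    unfolding d_def by (rule real_le_rsqrt) (simp add: power2_eq_square)
  hence diag: "\<mu> - k11 \<ge> 0" "\<mu> - k22 \<ge> 0" by (simp_all add: \<mu>_def abs_le_iff field_simps)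
  have "d * d = ((k11 - k22) / 2)\<^sup>2 + k12\<^sup>2" by (simp add: d_def)
  hence det: "(\<mu> - k11) * (\<mu> - k22) = k12 * k12"
    unfolding \<mu>_def by (simp add: power2_eq_square algebra_simps divide_simps)
  have "k11 * x1 * x1 + 2 * k12 * x1 * x2 + k22 * x2 * x2 \<le> \<mu> * (x1 * x1 + x2 * x2)"
    using quadratic_form_nonneg_if_singular[OF diag det, of x1 x2] by (simp add: algebra_simps)
  moreover have "\<mu> * (x1 * x1 + x2 * x2) \<le> x1 * x1 + x2 * x2" if "\<mu> \<le> 1"
    using mult_right_mono[OF that, of "x1 * x1 + x2 * x2"] by simp
  ultimately have "\<mu> > 1" using exceeds by force
  moreover have "\<exists>z1 z2. k11 * z1 + k12 * z2 = \<mu> * z1 \<and> k12 * z1 + k22 * z2 = \<mu> * z2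
      \<and> z1 * z1 + z2 * z2 > 0"
  proof (cases "k12 = 0")
    case True
    hence "\<mu> = k11 \<or> \<mu> = k22" using det by simp
    thus ?thesis
    proof
      assume "\<mu> = k11" thus ?thesis using True by (intro exI[of _ 1] exI[of _ 0]) simp
    next
      assume "\<mu> = k22" thus ?thesis using True by (intro exI[of _ 0] exI[of _ 1]) simp
    qed
  next
    case False
    have "k11 * k12 + k12 * (\<mu> - k11) = \<mu> * k12"
      and "k12 * k12 + k22 * (\<mu> - k11) = \<mu> * (\<mu> - k11)"
      using det by (simp_all add: algebra_simps)
    moreover have "k12 * k12 + (\<mu> - k11) * (\<mu> - k11) > 0"
      using False not_real_square_gt_zero[of k12] zero_le_square[of "\<mu> - k11"] by linarith
    ultimately show ?thesis by blast
  qed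
  ultimately show ?thesis using that by blast
qed

lemma two_positive_roots:
  fixes \<mu> :: real
  assumes "\<mu> > 1"
  obtains l1 l2 where "l1 * l1 - (4 * \<mu> - 2) * l1 + 1 = 0" "l2 * l2 - (4 * \<mu> - 2) * l2 + 1 = 0"
    "0 < l1" "0 < l2" "l1 \<noteq> l2"
proof
  define d where "d = sqrt (\<mu> * \<mu> - \<mu>)"
  have d: "d > 0" "d * d = \<mu> * \<mu> - \<mu>" using assms by (simp_all add: d_def)
  show "(2 * \<mu> - 1 + 2 * d) * (2 * \<mu> - 1 + 2 * d) - (4 * \<mu> - 2) * (2 * \<mu> - 1 + 2 * d) + 1 = 0"
    "(2 * \<mu> - 1 - 2 * d) * (2 * \<mu> - 1 - 2 * d) - (4 * \<mu> - 2) * (2 * \<mu> - 1 - 2 * d) + 1 = 0"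
    using d by (simp_all add: algebra_simps)
  show "0 < 2 * \<mu> - 1 + 2 * d" "2 * \<mu> - 1 + 2 * d \<noteq> 2 * \<mu> - 1 - 2 * d"
    using assms d by simp_all
  have "d < sqrt ((\<mu> - 1 / 2)\<^sup>2)"
    unfolding d_def by (rule real_sqrt_less_mono) (simp add: power2_eq_square algebra_simps)
  hence "2 * d < 2 * \<mu> - 1" using assms by simp
  thus "0 < 2 * \<mu> - 1 - 2 * d" by simp
qed

text \<open>l runs over the eigenvalues of g on span {a, b}, where g has trace 4\<mu> - 2 and
  determinant 1.\<close>
lemma null_eigenvector_in_plane:
  assumes lin: "linear g"
    and ga: "g a = (4 * \<mu> - 1) *\<^sub>R a - 2 *\<^sub>R b" and gb: "g b = (2 * \<mu>) *\<^sub>R a - b"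
    and form: "mink_form a a = r" "mink_form a b = \<mu> * r" "mink_form b b = \<mu> * r"
    and "r > 0" "\<mu> > 1"
    and l: "l * l - (4 * \<mu> - 2) * l + 1 = 0"
  defines "v \<equiv> (1 + l) *\<^sub>R a - 2 *\<^sub>R b"
  shows "v \<noteq> 0" "mink_form v v = 0" "g v = l *\<^sub>R v"
proof -
  have "g v = (1 + l) *\<^sub>R g a - 2 *\<^sub>R g b"
    unfolding v_def using lin by (simp add: linear_diff linear_cmul)
  also have "\<dots> = ((1 + l) * (4 * \<mu> - 1) - 4 * \<mu>) *\<^sub>R a - (2 * l) *\<^sub>R b"
    by (simp add: ga gb algebra_simps)
  also have "(1 + l) * (4 * \<mu> - 1) - 4 * \<mu> = l * (1 + l)" using l by (simp add: algebra_simps)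
  finally show "g v = l *\<^sub>R v" by (simp add: v_def algebra_simps)
  have "mink_form v v = r * (l * l - (4 * \<mu> - 2) * l + 1)"
    unfolding v_def using form by (simp add: mink_form_commute[of b a] algebra_simps)
  thus "mink_form v v = 0" using l by simp
  have "l \<noteq> 1" using l \<open>\<mu> > 1\<close> by auto
  moreover have "mink_form v b = \<mu> * r * (l - 1)" using form by (simp add: v_def algebra_simps)
  ultimately have "mink_form v b \<noteq> 0" using \<open>r > 0\<close> \<open>\<mu> > 1\<close> by simp
  thus "v \<noteq> 0" by auto
qed

section \<open>The product of two half-turns\<close>

locale half_turn_normals =
  fixes n1 n2 m1 m2 :: mink
  assumes n: "mink_orthonormal n1 n2" and m: "mink_orthonormal m1 m2"
    and no_common_causal: "\<And>s. s \<in> mink_orth {n1, n2, m1, m2} \<Longrightarrow> mink_form s s \<le> 0 \<Longrightarrow> s = 0"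
begin

lemma no_fixed_point:
  assumes x: "x \<in> H4"
  shows "half_turn n1 n2 (half_turn m1 m2 x) \<noteq> x"
proof
  assume "half_turn n1 n2 (half_turn m1 m2 x) = x"
  hence "half_turn m1 m2 x = half_turn n1 n2 x" by (metis half_turn_half_turn[OF n])
  hence same: "mink_proj m1 m2 x = mink_proj n1 n2 x" by (simp add: half_turn_def)
  define w where "w = x - mink_proj n1 n2 x"
  have "mink_form w n1 = 0" "mink_form w n2 = 0"
    using mink_form_mink_proj_normal[OF n] by (simp_all add: w_def)
  moreover have "mink_form w m1 = 0" "mink_form w m2 = 0"
    using mink_form_mink_proj_normal[OF m] by (simp_all add: w_def flip: same)
  ultimately have "w \<in> mink_orth {n1, n2, m1, m2}" by (simp add: mink_orth_def)
  moreover have ww: "mink_form w w < 0"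
  proof -
    have "mink_form w w = mink_form x x - mink_form (mink_proj n1 n2 x) (mink_proj n1 n2 x)"
      using mink_form_mink_proj_right[OF n, of x x]
      by (simp add: w_def mink_form_commute[of "mink_proj n1 n2 x" x])
    moreover have "mink_form x x = -1" using x by (simp add: H4_def)
    moreover have "0 \<le> (mink_form x n1)\<^sup>2 + (mink_form x n2)\<^sup>2" by simp
    ultimately show ?thesis using mink_form_mink_proj_self[OF n, of x] by linarith
  qed
  ultimately have "w = 0" using no_common_causal by simp
  thus False using ww by simp
qed

lemma exists_vector_expanded_by_proj:
  "\<exists>a. mink_proj n1 n2 a = a \<and> mink_form a a < mink_form (mink_proj m1 m2 a) (mink_proj m1 m2 a)"
proof (rule ccontr)
  assume "\<not> ?thesis"
  hence "\<forall>a. mink_proj n1 n2 a = a \<longrightarrow>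
      mink_form (mink_proj m1 m2 a) (mink_proj m1 m2 a) \<le> mink_form a a"
    by (simp add: not_less)
  hence shrink: "mink_form (mink_proj m1 m2 a) (mink_proj m1 m2 a) \<le> mink_form a a"
    if "a \<in> span {n1, n2}" for a
    using mink_proj_span[OF n that] by blast
  have nonneg_M: "0 \<le> mink_form y y" if "y \<in> span {m1, m2}" for y
  proof -
    have "mink_form y y = (mink_form y m1)\<^sup>2 + (mink_form y m2)\<^sup>2"
      using mink_form_mink_proj_self[OF m, of y] unfolding mink_proj_span[OF m that] .
    thus ?thesis by simp
  qed
  have "\<forall>v\<in>span {n1, n2, m1, m2}. 0 \<le> mink_form v v"
  proof
    fix v assume "v \<in> span {n1, n2, m1, m2}"
    moreover have "{n1, n2, m1, m2} = {n1, n2} \<union> {m1, m2}" by blast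
    ultimately have "v \<in> span ({n1, n2} \<union> {m1, m2})" by simp
    then obtain a c where v: "v = a + c" and a: "a \<in> span {n1, n2}" and c: "c \<in> span {m1, m2}"
      unfolding span_Un by blast
    define b where "b = mink_proj m1 m2 a"
    have "mink_form b c = mink_form a (mink_proj m1 m2 c)"
      unfolding b_def mink_form_mink_proj_commute ..
    hence bc: "mink_form b c = mink_form a c" using mink_proj_span[OF m c] by simp
    have "b + c \<in> span {m1, m2}"
      using c span_superset[of "{m1, m2}"] by (simp add: b_def mink_proj_def span_add span_mul)
    hence "0 \<le> mink_form (b + c) (b + c)" by (rule nonneg_M)
    moreover have "mink_form (b + c) (b + c) = mink_form b b + 2 * mink_form a c + mink_form c c"
      using bc by (simp add: mink_form_commute[of c b])
    moreover have "mink_form v v = mink_form a a + 2 * mink_form a c + mink_form c c"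
      by (simp add: v mink_form_commute[of c a])
    moreover have "mink_form b b \<le> mink_form a a" using shrink[OF a] by (simp add: b_def)
    ultimately show "0 \<le> mink_form v v" by linarith
  qed
  then obtain s where "s \<in> mink_orth {n1, n2, m1, m2}" "s \<noteq> 0" "mink_form s s \<le> 0"
    using causal_vector_in_mink_orth[of "span {n1, n2, m1, m2}"] by (auto simp: mink_orth_span)
  thus False using no_common_causal by blast
qed

lemma exists_eigenvector_gt_1:
  obtains \<mu> a where "\<mu> > 1" "mink_proj n1 n2 a = a" "mink_form a a > 0"
    "mink_proj n1 n2 (mink_proj m1 m2 a) = \<mu> *\<^sub>R a"
proof -
  define k where "k x y = mink_form (mink_proj m1 m2 x) (mink_proj m1 m2 y)" for x y
  have k_bilinear: "k (x1 *\<^sub>R n1 + x2 *\<^sub>R n2) y = x1 * k n1 y + x2 * k n2 y"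
    "k y (x1 *\<^sub>R n1 + x2 *\<^sub>R n2) = x1 * k y n1 + x2 * k y n2" for x1 x2 y
    using linear_mink_proj[of m1 m2]
    by (simp_all add: k_def linear_add linear_cmul)
  have k_sym: "k x y = k y x" for x y by (simp add: k_def mink_form_commute)
  obtain a0 where a0: "mink_proj n1 n2 a0 = a0" "mink_form a0 a0 < k a0 a0"
    using exists_vector_expanded_by_proj by (auto simp: k_def)
  define x1 x2 where "x1 = mink_form a0 n1" and "x2 = mink_form a0 n2"
  have a0_eq: "a0 = x1 *\<^sub>R n1 + x2 *\<^sub>R n2" using a0(1) by (simp add: mink_proj_def x1_def x2_def)
  have "mink_form a0 a0 = x1 * x1 + x2 * x2"
    using mink_form_mink_proj_self[OF n, of a0] a0(1) by (simp add: x1_def x2_def power2_eq_square)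
  moreover have "k a0 a0 = k n1 n1 * x1 * x1 + 2 * k n1 n2 * x1 * x2 + k n2 n2 * x2 * x2"
    unfolding a0_eq by (simp add: k_bilinear k_sym[of n2 n1] algebra_simps)
  ultimately obtain \<mu> z1 z2 where \<mu>: "\<mu> > 1"
    "k n1 n1 * z1 + k n1 n2 * z2 = \<mu> * z1" "k n1 n2 * z1 + k n2 n2 * z2 = \<mu> * z2"
    "z1 * z1 + z2 * z2 > 0"
    using a0(2) symmetric_2x2_eigenvector_gt_1 by metis
  define a where "a = z1 *\<^sub>R n1 + z2 *\<^sub>R n2"
  have "mink_proj n1 n2 a = a" by (simp add: a_def mink_proj_span[OF n] span_add span_mul span_base)
  moreover have "mink_form a a = z1 * z1 + z2 * z2"
    using n by (simp add: a_def mink_orthonormal_def mink_form_commute[of n2 n1] algebra_simps)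
  moreover have "mink_form (mink_proj m1 m2 a) y = k y a" for y
    using mink_form_mink_proj_right[OF m, of y a]
    by (simp add: k_def mink_form_commute[of "mink_proj m1 m2 a" y])
  hence "mink_form (mink_proj m1 m2 a) n1 = \<mu> * z1" "mink_form (mink_proj m1 m2 a) n2 = \<mu> * z2"
    using \<mu>(2,3) by (simp_all add: a_def k_bilinear k_sym[of n2 n1] algebra_simps)
  hence "mink_proj n1 n2 (mink_proj m1 m2 a) = (\<mu> * z1) *\<^sub>R n1 + (\<mu> * z2) *\<^sub>R n2"
    by (simp add: mink_proj_def)
  hence "mink_proj n1 n2 (mink_proj m1 m2 a) = \<mu> *\<^sub>R a" by (simp add: a_def scaleR_add_right)
  ultimately show thesis using that \<mu>(1,4) by simp
qed

lemma hyperbolic_isometry_half_turn_comp: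
  "hyperbolic_isometry (half_turn n1 n2 \<circ> half_turn m1 m2)"
proof -
  define g where "g = half_turn n1 n2 \<circ> half_turn m1 m2"
  have iso: "is_H4_isometry g"
    unfolding g_def using is_H4_isometry_comp is_H4_isometry_half_turn n m by blast
  obtain \<mu> a where \<mu>: "\<mu> > 1" and a: "mink_proj n1 n2 a = a" "mink_form a a > 0"
    and eigen: "mink_proj n1 n2 (mink_proj m1 m2 a) = \<mu> *\<^sub>R a"
    by (rule exists_eigenvector_gt_1)
  define b where "b = mink_proj m1 m2 a"
  have ab: "mink_form a b = \<mu> * mink_form a a"
    using mink_form_mink_proj_commute[of n1 n2 a b] a(1) eigen by (simp add: b_def)
  have bb: "mink_form b b = mink_form a b"
    using mink_form_mink_proj_right[OF m, of a a] by (simp add: b_def)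
  have ht: "half_turn m1 m2 a = a - 2 *\<^sub>R b" "half_turn m1 m2 b = - b"
    "half_turn n1 n2 a = - a" "half_turn n1 n2 b = b - (2 * \<mu>) *\<^sub>R a"
    using a(1) eigen mink_proj_idem[OF m] by (simp_all add: half_turn_def b_def scaleR_2 algebra_simps)
  have lin_n: "linear (half_turn n1 n2)"
    using is_H4_isometry_half_turn[OF n] by (simp add: is_H4_isometry_def)
  have "g a = half_turn n1 n2 a - 2 *\<^sub>R half_turn n1 n2 b"
    by (simp add: g_def ht linear_diff[OF lin_n] linear_cmul[OF lin_n])
  hence ga: "g a = (4 * \<mu> - 1) *\<^sub>R a - 2 *\<^sub>R b" by (simp add: ht algebra_simps)
  have "g b = - half_turn n1 n2 b" by (simp add: g_def ht linear_neg[OF lin_n])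
  hence gb: "g b = (2 * \<mu>) *\<^sub>R a - b" by (simp add: ht)
  obtain l1 l2 where l: "l1 * l1 - (4 * \<mu> - 2) * l1 + 1 = 0" "l2 * l2 - (4 * \<mu> - 2) * l2 + 1 = 0"
    "0 < l1" "0 < l2" "l1 \<noteq> l2"
    using two_positive_roots[OF \<mu>] by blast
  have lin: "linear g" using iso by (simp add: is_H4_isometry_def)
  note null_eigenvector = null_eigenvector_in_plane[OF lin ga gb refl ab bb[unfolded ab] a(2) \<mu>]
  show ?thesis
    using hyperbolic_isometryI[OF iso _ null_eigenvector[OF l(1)] null_eigenvector[OF l(2)] l(3-5)]
      no_fixed_point by (simp add: g_def comp_def)
qed

end

theorem lemma6p3:
  fixes P Q :: "mink set" and hP hQ :: "mink \<Rightarrow> mink"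
  assumes "is_plane P" and "is_plane Q" and "ultra_parallel P Q"
    and "is_half_turn P hP" and "is_half_turn Q hQ"
  shows "hyperbolic_isometry (hP \<circ> hQ)"
proof -
  obtain n1 n2 where n: "mink_orthonormal n1 n2" and P: "P = H4 \<inter> mink_orth {n1, n2}"
    and hP: "hP = half_turn n1 n2"
    using is_half_turnE[OF assms(4)] by blast
  obtain m1 m2 where m: "mink_orthonormal m1 m2" and Q: "Q = H4 \<inter> mink_orth {m1, m2}"
    and hQ: "hQ = half_turn m1 m2"
    using is_half_turnE[OF assms(5)] by blast
  have "half_turn_normals n1 n2 m1 m2"
  proof
    fix s assume s: "s \<in> mink_orth {n1, n2, m1, m2}" "mink_form s s \<le> 0"
    have "P \<noteq> {}" "Q \<noteq> {}" using assms(1,2) by (auto simp: is_plane_def)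
    moreover have "s \<in> mink_orth {n1, n2} \<inter> mink_orth {m1, m2}" using s(1) by (simp add: mink_orth_def)
    ultimately show "s = 0"
      using ultra_parallel_causal_common_vector_eq_0[OF subspace_mink_orth _ subspace_mink_orth]
        assms(3) s(2) unfolding P Q by blast
  qed (fact n m)+
  thus ?thesis unfolding hP hQ by (rule half_turn_normals.hyperbolic_isometry_half_turn_comp)
qed

end
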